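(* Let $\mathbf{A}$ be a finite algebra and $B$ a subuniverse of $\mathbf{A}$. There exists a function $f:\mathbb{N}\to\mathbb{N}$ such that for every $N$, if $\mathbf{A}$ has an $f(N)$-ary $B$-essential subpower, then there exist $b_1,b_2\in B$ and $a_1,\dots,a_N\in A$ such that the subuniverse of $\mathbf{A}^N$ generated by the $N$ tuples $(a_1,b_2,b_2,\dots,b_2)$, $(b_1,a_2,b_2,\dots,b_2)$, $(b_1,b_1,a_3,b_2,\dots,b_2)$, $\dots$, $(b_1,\dots,b_1,a_N)$ (the $i$-th tuple has $b_1$ in positions $<i$, $a_i$ in position $i$, and $b_2$ in positions $>i$) is $B$-essential.
   Context: $B$-essential: a subuniverse $R$ of $\mathbf{A}^k$ is $B$-essential if $R\cap B^k=\emptyset$ and for every $i\in\{1,\dots,k\}$, $\pi_{\widehat i}(R)\cap B^{k-1}\neq\emptyset$, where $\pi_{\widehat i}(R)$ is the projection of $R$ onto all coordinates except the $i$-th. A subpower is a subuniverse of a finite power of $\mathbf{A}$. *)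

theory Defs
  imports Main
begin

text \<open>An algebra is given by a universe A :: 'a set and a set F of basic operations,
each a pair (n, f) of an arity n and a function f on argument lists of length n.\<close>

type_synonym 'a ops = "(nat \<times> ('a list \<Rightarrow> 'a)) set"

definition subuniverse :: "'a ops \<Rightarrow> 'a set \<Rightarrow> 'a set \<Rightarrow> bool" where
  "subuniverse F A S \<longleftrightarrow> S \<subseteq> A \<and>
     (\<forall>(n, f) \<in> F. \<forall>xs. length xs = n \<and> set xs \<subseteq> S \<longrightarrow> f xs \<in> S)"

definition algebra :: "'a ops \<Rightarrow> 'a set \<Rightarrow> bool" where
  "algebra F A \<longleftrightarrow> subuniverse F A A"

definition tuples :: "nat \<Rightarrow> 'a set \<Rightarrow> 'a list set" where
  "tuples k A = {xs. length xs = k \<and> set xs \<subseteq> A}"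

definition power_op :: "nat \<Rightarrow> ('a list \<Rightarrow> 'a) \<Rightarrow> 'a list list \<Rightarrow> 'a list" where
  "power_op k f xss = map (\<lambda>i. f (map (\<lambda>xs. xs ! i) xss)) [0..<k]"

definition power_ops :: "nat \<Rightarrow> 'a ops \<Rightarrow> 'a list ops" where
  "power_ops k F = (\<lambda>(n, f). (n, power_op k f)) ` F"

definition subpower :: "'a ops \<Rightarrow> 'a set \<Rightarrow> nat \<Rightarrow> 'a list set \<Rightarrow> bool" where
  "subpower F A k R \<longleftrightarrow> subuniverse (power_ops k F) (tuples k A) R"

definition Sg_power :: "'a ops \<Rightarrow> 'a set \<Rightarrow> nat \<Rightarrow> 'a list set \<Rightarrow> 'a list set" where
  "Sg_power F A k G = \<Inter> {R. subpower F A k R \<and> G \<subseteq> R}"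

definition drop_coord :: "nat \<Rightarrow> 'a list \<Rightarrow> 'a list" where
  "drop_coord i xs = take i xs @ drop (Suc i) xs"

definition B_essential :: "'a set \<Rightarrow> nat \<Rightarrow> 'a list set \<Rightarrow> bool" where
  "B_essential B k R \<longleftrightarrow> R \<inter> tuples k B = {} \<and>
     (\<forall>i<k. drop_coord i ` R \<inter> tuples (k - 1) B \<noteq> {})"

end

theory Submission imports Defs "HOL-Library.Ramsey" begin

text \<open>
Take a B-essential subpower R of large arity k and, for every coordinate i, a tuple r_i \<in> R
that lies in B outside coordinate i. Colour each pair x < y of coordinates by the pair
(r_y(x), r_x(y)) \<in> B \<times> B; Ramsey's theorem gives N coordinates h_0 < \<dots> < h_{N-1} on which the
colour is constant, say (b_1, b_2). Projecting the tuples r_{h_m} onto these coordinates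
yields exactly the N staircase tuples. They generate a subuniverse of the projection of
{x \<in> R. x is in B outside the h_m}, which is a subpower of A^N avoiding B^N because R
avoids B^k; and each staircase tuple lies in B off its diagonal position.
\<close>

lemma subpower_subset_tuples: "subpower F A k R \<Longrightarrow> R \<subseteq> tuples k A"
  by (simp add: subpower_def subuniverse_def)

lemma subpower_Int: "subpower F A k R \<Longrightarrow> subpower F A k Q \<Longrightarrow> subpower F A k (R \<inter> Q)"
  unfolding subpower_def subuniverse_def by blast

lemma subpowerI:
  assumes "R \<subseteq> tuples k A"
    and "\<And>n f xss. (n, f) \<in> F \<Longrightarrow> length xss = n \<Longrightarrow> set xss \<subseteq> R \<Longrightarrow> power_op k f xss \<in> R"
  shows "subpower F A k R"
  using assms unfolding subpower_def subuniverse_def power_ops_def by fastforce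

lemma subpower_closed:
  "subpower F A k R \<Longrightarrow> (n, f) \<in> F \<Longrightarrow> length xss = n \<Longrightarrow> set xss \<subseteq> R \<Longrightarrow> power_op k f xss \<in> R"
  unfolding subpower_def subuniverse_def power_ops_def by fastforce

lemma length_power_op [simp]: "length (power_op k f xss) = k"
  by (simp add: power_op_def)

lemma nth_power_op [simp]: "i < k \<Longrightarrow> power_op k f xss ! i = f (map (\<lambda>xs. xs ! i) xss)"
  by (simp add: power_op_def)

lemma select_power_op:
  assumes "set hs \<subseteq> {..<k}"
  shows "map ((!) (power_op k f xss)) hs
           = power_op (length hs) f (map (\<lambda>x. map ((!) x) hs) xss)"
proof (rule nth_equalityI)
  fix i assume "i < length (map ((!) (power_op k f xss)) hs)"
  moreover have "hs ! i < k" if "i < length hs"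
    using assms nth_mem[OF that] by blast
  ultimately show "map ((!) (power_op k f xss)) hs ! i
                     = power_op (length hs) f (map (\<lambda>x. map ((!) x) hs) xss) ! i"
    by (simp add: comp_def)
qed simp

lemma subpower_image_select:
  assumes T: "subpower F A k T" and hs: "set hs \<subseteq> {..<k}"
  shows "subpower F A (length hs) ((\<lambda>x. map ((!) x) hs) ` T)"
proof (rule subpowerI)
  let ?sel = "\<lambda>x. map ((!) x) hs"
  show "?sel ` T \<subseteq> tuples (length hs) A"
  proof
    fix y assume "y \<in> ?sel ` T"
    then obtain x where "x \<in> T" and y: "y = ?sel x"
      by blast
    then have "length x = k" and "set x \<subseteq> A"
      using subpower_subset_tuples[OF T] by (auto simp: tuples_def)
    then have "set (?sel x) \<subseteq> A"
      using hs by (auto simp: subset_iff)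
    then show "y \<in> tuples (length hs) A"
      by (simp add: y tuples_def)
  qed
  fix n f xss
  assume nf: "(n, f) \<in> F" and len: "length xss = n" and "set xss \<subseteq> ?sel ` T"
  then have "xss \<in> map ?sel ` lists T"
    by (metis lists_image in_listsI subsetD)
  then obtain yss where yss: "set yss \<subseteq> T" "xss = map ?sel yss"
    by auto
  then have "power_op k f yss \<in> T"
    using subpower_closed[OF T nf] len by simp
  moreover have "?sel (power_op k f yss) = power_op (length hs) f xss"
    unfolding yss(2) by (rule select_power_op[OF hs])
  ultimately show "power_op (length hs) f xss \<in> ?sel ` T"
    by (metis image_eqI)
qed

lemma subpower_in_subuniverse_outside:
  assumes A: "algebra F A" and B: "subuniverse F A B"
  shows "subpower F A k {x \<in> tuples k A. \<forall>j<k. j \<notin> J \<longrightarrow> x ! j \<in> B}"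
proof (rule subpowerI)
  fix n f xss
  assume nf: "(n, f) \<in> F" and len: "length xss = n"
    and xss: "set xss \<subseteq> {x \<in> tuples k A. \<forall>j<k. j \<notin> J \<longrightarrow> x ! j \<in> B}"
  have "f (map (\<lambda>xs. xs ! i) xss) \<in> A" if "i < k" for i
  proof -
    have "set (map (\<lambda>xs. xs ! i) xss) \<subseteq> A"
      using xss that by (fastforce simp: tuples_def)
    then show ?thesis
      using A nf len unfolding algebra_def subuniverse_def by fastforce
  qed
  moreover have "f (map (\<lambda>xs. xs ! i) xss) \<in> B" if "i < k" "i \<notin> J" for i
  proof -
    have "set (map (\<lambda>xs. xs ! i) xss) \<subseteq> B"
      using xss that by fastforce
    then show ?thesis
      using B nf len unfolding subuniverse_def by fastforce
  qed
  ultimately show "power_op k f xss \<in> {x \<in> tuples k A. \<forall>j<k. j \<notin> J \<longrightarrow> x ! j \<in> B}"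
    by (auto simp: tuples_def in_set_conv_nth)
qed blast

lemma nth_in_tuples: "xs \<in> tuples k A \<Longrightarrow> i < k \<Longrightarrow> xs ! i \<in> A"
  by (auto simp: tuples_def)

lemma Sg_power_least: "subpower F A N T \<Longrightarrow> G \<subseteq> T \<Longrightarrow> Sg_power F A N G \<subseteq> T"
  unfolding Sg_power_def by blast

lemma generators_subset_Sg_power: "G \<subseteq> Sg_power F A N G"
  unfolding Sg_power_def by blast

subsection \<open>Homogeneous witnesses of B-essentiality\<close>

lemma drop_coord_in_tuplesD:
  assumes "drop_coord i xs \<in> tuples m B" and "j < length xs" and "j \<noteq> i"
  shows "xs ! j \<in> B"
proof -
  have "xs ! j \<in> set (drop_coord i xs)"
  proof (cases "j < i")
    case True
    then have "xs ! j = take i xs ! j" and "j < length (take i xs)"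
      using assms(2) by simp_all
    then show ?thesis
      unfolding drop_coord_def by (metis Un_iff nth_mem set_append)
  next
    case False
    then have "xs ! j = drop (Suc i) xs ! (j - Suc i)" and "j - Suc i < length (drop (Suc i) xs)"
      using assms(2,3) by simp_all
    then show ?thesis
      unfolding drop_coord_def by (metis Un_iff nth_mem set_append)
  qed
  then show ?thesis
    using assms(1) by (auto simp: tuples_def)
qed

lemma B_essential_witnesses:
  assumes "B_essential B k R" and "R \<subseteq> tuples k A"
  obtains r where "\<And>i. i < k \<Longrightarrow> r i \<in> R"
    and "\<And>i j. i < k \<Longrightarrow> j < k \<Longrightarrow> j \<noteq> i \<Longrightarrow> r i ! j \<in> B"
proof -
  have "\<forall>i<k. \<exists>x. x \<in> R \<and> drop_coord i x \<in> tuples (k - 1) B"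
    using assms(1) unfolding B_essential_def by blast
  then obtain r where r: "\<And>i. i < k \<Longrightarrow> r i \<in> R \<and> drop_coord i (r i) \<in> tuples (k - 1) B"
    by metis
  show thesis
  proof (rule that)
    show "r i \<in> R" if "i < k" for i
      using r[OF that] by blast
    fix i j assume i: "i < k" and "j < k" and "j \<noteq> i"
    moreover have "length (r i) = k"
      using r[OF i] assms(2) by (auto simp: tuples_def)
    ultimately show "r i ! j \<in> B"
      using r[OF i] drop_coord_in_tuplesD by metis
  qed
qed

lemma ramsey_finite_colours:
  fixes S :: "'c set"
  assumes "finite S"
  obtains M :: "nat \<Rightarrow> nat" where
    "\<And>N k col. M N \<le> k \<Longrightarrow> col \<in> nsets {..<k} 2 \<rightarrow> S \<Longrightarrow>
       \<exists>H c. H \<in> nsets {..<k} N \<and> c \<in> S \<and> col ` nsets H 2 \<subseteq> {c}"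
proof -
  obtain h where h: "bij_betw h S {..<card S}"
    using ex_bij_betw_finite_nat[OF assms] atLeast0LessThan by metis
  have "\<forall>N. \<exists>M::nat. partn_lst {..<M} (replicate (card S) N) 2"
    using ramsey_full by blast
  then obtain M :: "nat \<Rightarrow> nat" where M: "\<And>N. partn_lst {..<M N} (replicate (card S) N) 2"
    by metis
  show thesis
  proof (rule that)
    fix N k and col :: "nat set \<Rightarrow> 'c"
    assume k: "M N \<le> k" and col: "col \<in> nsets {..<k} 2 \<rightarrow> S"
    then have "h \<circ> col \<in> nsets {..<k} 2 \<rightarrow> {..<length (replicate (card S) N)}"
      using bij_betwE[OF h] by auto
    then obtain i H where "i < length (replicate (card S) N)"
      and "H \<in> nsets {..<k} (replicate (card S) N ! i)" and hom: "(h \<circ> col) ` nsets H 2 \<subseteq> {i}"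
      by (rule partn_lstE[OF partn_lst_greater_resource[OF M k] _ refl])
    then have i: "i < card S" and H: "H \<in> nsets {..<k} N"
      by simp_all
    have "col X = inv_into S h i" if X: "X \<in> nsets H 2" for X
    proof -
      have "col X \<in> S"
        using col H X by (auto simp: nsets_def)
      moreover have "h (col X) = i"
        using hom X by auto
      ultimately show ?thesis
        using bij_betw_inv_into_left[OF h] by metis
    qed
    moreover have "inv_into S h i \<in> S"
      using h i by (metis bij_betw_def inv_into_into lessThan_iff)
    ultimately show "\<exists>H c. H \<in> nsets {..<k} N \<and> c \<in> S \<and> col ` nsets H 2 \<subseteq> {c}"
      using H by blast
  qed
qed

lemma ramsey_ordered_pairs:
  fixes S :: "'c set"
  assumes "finite S"
  obtains M :: "nat \<Rightarrow> nat" where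
    "\<And>N k g. M N \<le> k \<Longrightarrow> (\<And>x y. x < y \<Longrightarrow> y < k \<Longrightarrow> g x y \<in> S) \<Longrightarrow>
       \<exists>H c. H \<subseteq> {..<k} \<and> card H = N \<and> c \<in> S \<and> (\<forall>x\<in>H. \<forall>y\<in>H. x < y \<longrightarrow> g x y = c)"
proof -
  obtain M :: "nat \<Rightarrow> nat" where M: "\<And>N k col. M N \<le> k \<Longrightarrow> col \<in> nsets {..<k} 2 \<rightarrow> S \<Longrightarrow>
       \<exists>H c. H \<in> nsets {..<k} N \<and> c \<in> S \<and> col ` nsets H 2 \<subseteq> {c}"
    using ramsey_finite_colours[OF assms] by blast
  show thesis
  proof (rule that)
    fix N k and g :: "nat \<Rightarrow> nat \<Rightarrow> 'c"
    assume k: "M N \<le> k" and g: "\<And>x y. x < y \<Longrightarrow> y < k \<Longrightarrow> g x y \<in> S"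
    have "(\<lambda>X. g (Min X) (Max X)) \<in> nsets {..<k} 2 \<rightarrow> S"
      using g by (auto simp: ordered_nsets_2_eq min_def max_def)
    then obtain H c where H: "H \<in> nsets {..<k} N" and c: "c \<in> S"
      and hom: "(\<lambda>X. g (Min X) (Max X)) ` nsets H 2 \<subseteq> {c}"
      using M[OF k] by blast
    have "g x y = c" if "x \<in> H" "y \<in> H" "x < y" for x y
    proof -
      have "{x, y} \<in> nsets H 2"
        using that by simp
      then have "g (Min {x, y}) (Max {x, y}) = c"
        using hom by blast
      then show ?thesis
        using \<open>x < y\<close> by (simp add: min_def max_def)
    qed
    then show "\<exists>H c. H \<subseteq> {..<k} \<and> card H = N \<and> c \<in> S \<and> (\<forall>x\<in>H. \<forall>y\<in>H. x < y \<longrightarrow> g x y = c)"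
      using H c unfolding nsets_def by blast
  qed
qed

text \<open>On the coordinates listed in hs, each witness r y has b1 at the coordinates below y and b2
  at those above: exactly the staircase pattern once projected onto hs.\<close>

definition homogeneous_witnesses ::
    "'a set \<Rightarrow> nat \<Rightarrow> 'a list set \<Rightarrow> (nat \<Rightarrow> 'a list) \<Rightarrow> nat list \<Rightarrow> 'a \<Rightarrow> 'a \<Rightarrow> bool" where
  "homogeneous_witnesses B k R r hs b1 b2 \<longleftrightarrow>
     (\<forall>i<k. r i \<in> R) \<and> (\<forall>i<k. \<forall>j<k. j \<noteq> i \<longrightarrow> r i ! j \<in> B) \<and>
     sorted_wrt (<) hs \<and> set hs \<subseteq> {..<k} \<and> b1 \<in> B \<and> b2 \<in> B \<and>
     (\<forall>x\<in>set hs. \<forall>y\<in>set hs. x < y \<longrightarrow> r y ! x = b1 \<and> r x ! y = b2)"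

lemma B_essential_homogeneous_witnesses:
  assumes "finite B"
  obtains M :: "nat \<Rightarrow> nat" where
    "\<And>N k R. M N \<le> k \<Longrightarrow> B_essential B k R \<Longrightarrow> R \<subseteq> tuples k A \<Longrightarrow>
       \<exists>r hs b1 b2. homogeneous_witnesses B k R r hs b1 b2 \<and> length hs = N"
proof -
  obtain M :: "nat \<Rightarrow> nat" where M: "\<And>N k g. M N \<le> k \<Longrightarrow> (\<And>x y. x < y \<Longrightarrow> y < k \<Longrightarrow> g x y \<in> B \<times> B) \<Longrightarrow>
       \<exists>H c. H \<subseteq> {..<k} \<and> card H = N \<and> c \<in> B \<times> B \<and> (\<forall>x\<in>H. \<forall>y\<in>H. x < y \<longrightarrow> g x y = c)"
    using ramsey_ordered_pairs[OF finite_cartesian_product[OF assms assms]] by blast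
  show thesis
  proof (rule that)
    fix N k R
    assume k: "M N \<le> k" and R: "B_essential B k R" "R \<subseteq> tuples k A"
    obtain r where r: "\<And>i. i < k \<Longrightarrow> r i \<in> R"
      and rB: "\<And>i j. i < k \<Longrightarrow> j < k \<Longrightarrow> j \<noteq> i \<Longrightarrow> r i ! j \<in> B"
      using B_essential_witnesses[OF R] by metis
    have "(r y ! x, r x ! y) \<in> B \<times> B" if "x < y" "y < k" for x y
      using rB that by simp
    from M[OF k, of "\<lambda>x y. (r y ! x, r x ! y)", OF this]
    obtain H b1 b2 where H: "H \<subseteq> {..<k}" "card H = N" and b: "b1 \<in> B" "b2 \<in> B"
      and hom: "\<forall>x\<in>H. \<forall>y\<in>H. x < y \<longrightarrow> r y ! x = b1 \<and> r x ! y = b2"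
      by auto
    moreover have "sorted_wrt (<) (sorted_list_of_set H)" "set (sorted_list_of_set H) = H"
      "length (sorted_list_of_set H) = N"
      using H finite_subset[OF H(1)] by simp_all
    ultimately show "\<exists>r hs b1 b2. homogeneous_witnesses B k R r hs b1 b2 \<and> length hs = N"
      using r rB unfolding homogeneous_witnesses_def
      by (intro exI[of _ r] exI[of _ "sorted_list_of_set H"] exI[of _ b1] exI[of _ b2]) auto
  qed
qed

subsection \<open>Staircase tuples generate B-essential subpowers\<close>

definition staircase :: "'a \<Rightarrow> (nat \<Rightarrow> 'a) \<Rightarrow> 'a \<Rightarrow> nat \<Rightarrow> nat \<Rightarrow> 'a list" where
  "staircase b1 a b2 N i = map (\<lambda>j. if j < i then b1 else if j = i then a j else b2) [0..<N]"

lemma drop_coord_staircase: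
  assumes "i < N" and "b1 \<in> B" and "b2 \<in> B"
  shows "drop_coord i (staircase b1 a b2 N i) \<in> tuples (N - 1) B"
  using assms by (auto simp: staircase_def drop_coord_def tuples_def take_map drop_map)

lemma staircase_eq_select:
  assumes sorted: "sorted_wrt (<) hs"
    and hom: "\<And>x y. x \<in> set hs \<Longrightarrow> y \<in> set hs \<Longrightarrow> x < y \<Longrightarrow> r y ! x = b1 \<and> r x ! y = b2"
    and m: "m < length hs"
  shows "staircase b1 (\<lambda>j. r (hs ! j) ! (hs ! j)) b2 (length hs) m = map ((!) (r (hs ! m))) hs"
proof (rule nth_equalityI)
  fix j assume "j < length (staircase b1 (\<lambda>j. r (hs ! j) ! (hs ! j)) b2 (length hs) m)"
  then have j: "j < length hs"
    by (simp add: staircase_def)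
  consider "j < m" | "j = m" | "m < j"
    by linarith
  then show "staircase b1 (\<lambda>j. r (hs ! j) ! (hs ! j)) b2 (length hs) m ! j = map ((!) (r (hs ! m))) hs ! j"
  proof cases
    case 1
    then show ?thesis
      using hom[of "hs ! j" "hs ! m"] sorted_wrt_nth_less[OF sorted 1 m] j m by (simp add: staircase_def)
  next
    case 2
    then show ?thesis
      using j by (simp add: staircase_def)
  next
    case 3
    then show ?thesis
      using hom[of "hs ! m" "hs ! j"] sorted_wrt_nth_less[OF sorted 3 j] j m by (simp add: staircase_def)
  qed
qed (simp add: staircase_def)

lemma B_essential_Sg_power_select:
  assumes A: "algebra F A" and B: "subuniverse F A B"
    and R: "subpower F A k R" and R_B: "R \<inter> tuples k B = {}"
    and hs: "set hs \<subseteq> {..<k}"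
    and G: "G \<subseteq> (\<lambda>x. map ((!) x) hs) ` {x \<in> R. \<forall>j<k. j \<notin> set hs \<longrightarrow> x ! j \<in> B}"
    and diag: "\<And>i. i < length hs \<Longrightarrow> \<exists>g\<in>G. drop_coord i g \<in> tuples (length hs - 1) B"
  shows "B_essential B (length hs) (Sg_power F A (length hs) G)"
proof -
  let ?sel = "\<lambda>x. map ((!) x) hs"
  define Q where "Q = {x \<in> tuples k A. \<forall>j<k. j \<notin> set hs \<longrightarrow> x ! j \<in> B}"
  have RQ: "{x \<in> R. \<forall>j<k. j \<notin> set hs \<longrightarrow> x ! j \<in> B} = R \<inter> Q"
    using subpower_subset_tuples[OF R] by (auto simp: Q_def)
  have "subpower F A (length hs) (?sel ` (R \<inter> Q))"
    unfolding Q_def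
    by (rule subpower_image_select[OF subpower_Int[OF R subpower_in_subuniverse_outside[OF A B]] hs])
  then have Sg: "Sg_power F A (length hs) G \<subseteq> ?sel ` (R \<inter> Q)"
    using G RQ Sg_power_least by metis
  have "x \<in> tuples k B" if x: "x \<in> Q" "?sel x \<in> tuples (length hs) B" for x
  proof -
    have "x ! j \<in> B" if j: "j < k" for j
    proof (cases "j \<in> set hs")
      case True
      then obtain l where "l < length hs" "j = hs ! l"
        by (metis in_set_conv_nth)
      then show ?thesis
        using x(2) by (auto simp: tuples_def)
    next
      case False
      then show ?thesis
        using x(1) j by (simp add: Q_def)
    qed
    moreover have "length x = k"
      using x(1) by (simp add: Q_def tuples_def)
    ultimately show ?thesis
      by (auto simp: tuples_def in_set_conv_nth)
  qed
  then have "Sg_power F A (length hs) G \<inter> tuples (length hs) B = {}"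
    using Sg R_B by blast
  moreover have "drop_coord i ` Sg_power F A (length hs) G \<inter> tuples (length hs - 1) B \<noteq> {}"
    if "i < length hs" for i
    using diag[OF that] generators_subset_Sg_power by blast
  ultimately show ?thesis
    unfolding B_essential_def by blast
qed

lemma B_essential_staircase:
  assumes A: "algebra F A" and B: "subuniverse F A B"
    and R: "subpower F A k R" and R_B: "R \<inter> tuples k B = {}"
    and W: "homogeneous_witnesses B k R r hs b1 b2"
  shows "B_essential B (length hs) (Sg_power F A (length hs)
           (staircase b1 (\<lambda>j. r (hs ! j) ! (hs ! j)) b2 (length hs) ` {0..<length hs}))"
proof -
  have r: "\<And>i. i < k \<Longrightarrow> r i \<in> R"
    and rB: "\<And>i j. i < k \<Longrightarrow> j < k \<Longrightarrow> j \<noteq> i \<Longrightarrow> r i ! j \<in> B"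
    and hs: "sorted_wrt (<) hs" "set hs \<subseteq> {..<k}" and b: "b1 \<in> B" "b2 \<in> B"
    and hom: "\<And>x y. x \<in> set hs \<Longrightarrow> y \<in> set hs \<Longrightarrow> x < y \<Longrightarrow> r y ! x = b1 \<and> r x ! y = b2"
    using W unfolding homogeneous_witnesses_def by blast+
  let ?G = "staircase b1 (\<lambda>j. r (hs ! j) ! (hs ! j)) b2 (length hs) ` {0..<length hs}"
  have hs_less: "hs ! m < k" if "m < length hs" for m
    using hs(2) nth_mem[OF that] by blast
  have "r (hs ! m) \<in> {x \<in> R. \<forall>j<k. j \<notin> set hs \<longrightarrow> x ! j \<in> B}" if m: "m < length hs" for m
  proof -
    have "r (hs ! m) ! j \<in> B" if "j < k" "j \<notin> set hs" for j
    proof -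
      have "j \<noteq> hs ! m"
        using that(2) nth_mem[OF m] by metis
      then show ?thesis
        using rB[OF hs_less[OF m] that(1)] by blast
    qed
    then show ?thesis
      using r[OF hs_less[OF m]] by blast
  qed
  then have "?G \<subseteq> (\<lambda>x. map ((!) x) hs) ` {x \<in> R. \<forall>j<k. j \<notin> set hs \<longrightarrow> x ! j \<in> B}"
    using staircase_eq_select[OF hs(1) hom] by auto
  moreover have "\<exists>g\<in>?G. drop_coord i g \<in> tuples (length hs - 1) B" if "i < length hs" for i
    using drop_coord_staircase[OF that b] that
    by (intro bexI[of _ "staircase b1 (\<lambda>j. r (hs ! j) ! (hs ! j)) b2 (length hs) i"]) auto
  ultimately show ?thesis
    by (rule B_essential_Sg_power_select[OF A B R R_B hs(2)])
qed

theorem lemma3p2: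
  fixes F :: "'a ops" and A B :: "'a set"
  assumes "algebra F A" and "finite A" and "subuniverse F A B"
  shows "\<exists>f :: nat \<Rightarrow> nat. \<forall>N \<ge> 1.
           (\<exists>R. subpower F A (f N) R \<and> B_essential B (f N) R) \<longrightarrow>
           (\<exists>b1 \<in> B. \<exists>b2 \<in> B. \<exists>a :: nat \<Rightarrow> 'a. (\<forall>j<N. a j \<in> A) \<and>
              B_essential B N
                (Sg_power F A N
                  ((\<lambda>i. map (\<lambda>j. if j < i then b1 else if j = i then a j else b2) [0..<N])
                     ` {0..<N})))"
proof -
  have "finite B"
    using assms(2,3) finite_subset unfolding subuniverse_def by blast
  then obtain M :: "nat \<Rightarrow> nat" where M: "\<And>N k R. M N \<le> k \<Longrightarrow> B_essential B k R \<Longrightarrow>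
      R \<subseteq> tuples k A \<Longrightarrow> \<exists>r hs b1 b2. homogeneous_witnesses B k R r hs b1 b2 \<and> length hs = N"
    using B_essential_homogeneous_witnesses[where A = A] by blast
  have "\<exists>b1 \<in> B. \<exists>b2 \<in> B. \<exists>a. (\<forall>j<N. a j \<in> A) \<and>
          B_essential B N (Sg_power F A N (staircase b1 a b2 N ` {0..<N}))"
    if R: "subpower F A (M N) R" "B_essential B (M N) R" for N R
  proof -
    obtain r hs b1 b2 where W: "homogeneous_witnesses B (M N) R r hs b1 b2" and N: "length hs = N"
      using M[OF order_refl R(2) subpower_subset_tuples[OF R(1)]] by blast
    have hs: "set hs \<subseteq> {..<M N}" and r: "\<forall>i<M N. r i \<in> R" and b: "b1 \<in> B" "b2 \<in> B"
      using W by (simp_all add: homogeneous_witnesses_def)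
    have "r (hs ! j) ! (hs ! j) \<in> A" if "j < N" for j
    proof -
      have "hs ! j \<in> set hs"
        using N that by simp
      then have "hs ! j < M N"
        using hs by blast
      then show ?thesis
        using r subpower_subset_tuples[OF R(1)] nth_in_tuples by blast
    qed
    moreover have "R \<inter> tuples (M N) B = {}"
      using R(2) by (simp add: B_essential_def)
    then have "B_essential B N (Sg_power F A N
                 (staircase b1 (\<lambda>j. r (hs ! j) ! (hs ! j)) b2 N ` {0..<N}))"
      using B_essential_staircase[OF assms(1,3) R(1) _ W] N by simp
    ultimately show ?thesis
      by (intro bexI[OF _ b(1)] bexI[OF _ b(2)] exI[of _ "\<lambda>j. r (hs ! j) ! (hs ! j)"]) auto
  qed
  then show ?thesis
    unfolding staircase_def by blast
qed

end
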